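(* There exists a snowflaking function $h$ such that for every $n\in\mathbb N$ there is a metric space $(X_n,d_n)$ of cardinality $n$ for which $(X_n,h\circ d_n)$ admits an isometric embedding into the $2$-dimensional Euclidean space $\mathbb R^2$. In particular, no bound depending only on $h$ and the dimension can hold on the cardinality of a metric space whose $h$-snowflake embeds isometrically into a finite-dimensional normed space.
   Context: Let $\mathbb R_{\geq}=[0,\infty)$. A function $h:\mathbb R_{\geq}\to\mathbb R_{\geq}$ is called a snowflaking function if: (S1) $h(0)=0$; (S2) $h$ is concave; (S3) $h(t)/t\to\infty$ as $t\to0^+$; (S4) $h(t)/t\to 0$ as $t\to\infty$. For such $h$ and a metric $d$ on $X$, $h\circ d$ is again a metric on $X$; $(X,h\circ d)$ is called the $h$-snowflake of $(X,d)$. *)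

theory Defs
  imports "HOL-Analysis.Analysis"
begin

definition snowflaking :: "(real \<Rightarrow> real) \<Rightarrow> bool" where
  "snowflaking h \<longleftrightarrow>
     (\<forall>t\<ge>0. h t \<ge> 0) \<and>
     h 0 = 0 \<and>
     concave_on {0..} h \<and>
     filterlim (\<lambda>t. h t / t) at_top (at_right 0) \<and>
     ((\<lambda>t. h t / t) \<longlongrightarrow> 0) at_top"

definition metric_on :: "'a set \<Rightarrow> ('a \<Rightarrow> 'a \<Rightarrow> real) \<Rightarrow> bool" where
  "metric_on X d \<longleftrightarrow>
     (\<forall>x\<in>X. \<forall>y\<in>X. d x y \<ge> 0) \<and>
     (\<forall>x\<in>X. \<forall>y\<in>X. d x y = 0 \<longleftrightarrow> x = y) \<and>
     (\<forall>x\<in>X. \<forall>y\<in>X. d x y = d y x) \<and>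
     (\<forall>x\<in>X. \<forall>y\<in>X. \<forall>z\<in>X. d x z \<le> d x y + d y z)"

end

theory Submission
  imports Defs "HOL-Real_Asymp.Real_Asymp"
begin

text \<open>
  Let h be the inverse of g(v) = v ln(1 + v) on [0,\<infinity>). Since g is convex and increasing, h is
  concave, and h(t)/t = 1/ln(1 + h(t)) gives the limits (S3) and (S4), so h is a snowflaking
  function. Put n points on the parabola y = x^2 in the plane; no three are collinear, so every
  triangle inequality between them is strict, say c < a + b. Because g is superlinear only by a logarithmic
  factor, g(\<lambda>c) \<le> g(\<lambda>a) + g(\<lambda>b) for all large \<lambda>. Hence for \<lambda> large d = g(\<lambda> |p_i - p_j|) is a
  metric on the n points, and its h-snowflake is realised by the points \<lambda> p_i.
\<close>

lemma concave_on_the_inv_into: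
  fixes g :: "real \<Rightarrow> real"
  assumes "convex_on S g" "strict_mono_on S g" "g ` S = T" "convex T"
  shows "concave_on T (the_inv_into S g)"
proof (rule concave_on_linorderI)
  fix u :: real and x y assume u: "0 < u" "u < 1" and xy: "x \<in> T" "y \<in> T"
  let ?h = "the_inv_into S g" and ?z = "(1 - u) *\<^sub>R x + u *\<^sub>R y"
  have inj: "inj_on g S" using assms(2) by (rule strict_mono_on_imp_inj_on)
  have h_in: "?h t \<in> S" and g_h: "g (?h t) = t" if "t \<in> T" for t
    using that assms(3) the_inv_into_into[OF inj] f_the_inv_into_f[OF inj] by auto
  have z: "?z \<in> T" using xy u convexD[OF assms(4)] by simp
  have comb: "(1 - u) *\<^sub>R ?h x + u *\<^sub>R ?h y \<in> S"
    using h_in xy u convexD[OF convex_on_imp_convex[OF assms(1)]] by simp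
  have "g ((1 - u) *\<^sub>R ?h x + u *\<^sub>R ?h y) \<le> (1 - u) * g (?h x) + u * g (?h y)"
    using convex_onD[OF assms(1)] h_in xy u by simp
  also have "\<dots> = g (?h ?z)" using g_h xy z by simp
  finally show "(1 - u) * ?h x + u * ?h y \<le> ?h ?z"
    using strict_mono_on_less_eq[OF assms(2) comb h_in[OF z]] by simp
qed (fact assms(4))

definition xln1p :: "real \<Rightarrow> real" where
  "xln1p v = v * ln (1 + v)"

definition xln1p_inv :: "real \<Rightarrow> real" where
  "xln1p_inv = the_inv_into {0..} xln1p"

lemma xln1p_0 [simp]: "xln1p 0 = 0"
  by (simp add: xln1p_def)

lemma xln1p_pos: "0 < v \<Longrightarrow> 0 < xln1p v"
  by (simp add: xln1p_def)

lemma xln1p_nonneg: "0 \<le> v \<Longrightarrow> 0 \<le> xln1p v"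
  by (simp add: xln1p_def)

lemma strict_mono_on_xln1p: "strict_mono_on {0..} xln1p"
proof (rule strict_mono_onI)
  fix x y :: real assume "x \<in> {0..}" "x < y"
  then have "x * ln (1 + x) \<le> x * ln (1 + y)" and "0 < ln (1 + y)"
    by (auto intro: mult_left_mono)
  with \<open>x < y\<close> show "xln1p x < xln1p y"
    unfolding xln1p_def by (smt (verit) mult_strict_right_mono)
qed

lemma convex_on_xln1p: "convex_on {0..} xln1p"
proof (rule convex_on_realI[where f' = "\<lambda>v. ln (1 + v) + v / (1 + v)"])
  fix x :: real assume "x \<in> {0..}"
  then show "(xln1p has_real_derivative ln (1 + x) + x / (1 + x)) (at x)"
    unfolding xln1p_def
    by (auto intro!: derivative_eq_intros simp: field_simps)
next
  fix x y :: real assume "x \<in> {0..}" "y \<in> {0..}" "x \<le> y"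
  then have "x / (1 + x) \<le> y / (1 + y)" "ln (1 + x) \<le> ln (1 + y)"
    by (simp_all add: field_simps)
  then show "ln (1 + x) + x / (1 + x) \<le> ln (1 + y) + y / (1 + y)" by linarith
qed auto

lemma xln1p_image: "xln1p ` {0..} = {0..}"
proof (intro equalityI subsetI)
  fix t :: real assume "t \<in> {0..}"
  define b where "b = t + exp 1"
  have "1 \<le> ln (1 + b)"
    using \<open>t \<in> {0..}\<close> by (subst ln_ge_iff) (auto simp: b_def add_pos_nonneg)
  then have "b \<le> xln1p b"
    using \<open>t \<in> {0..}\<close> mult_left_mono[of 1 "ln (1 + b)" b] by (simp add: b_def xln1p_def)
  then have "t \<le> xln1p b" unfolding b_def by (smt (verit) exp_gt_zero)
  moreover have "continuous_on {0..b} xln1p"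
    unfolding xln1p_def by (intro continuous_intros) auto
  ultimately obtain v where "0 \<le> v" "v \<le> b" "xln1p v = t"
    using IVT'[of xln1p 0 t b] \<open>t \<in> {0..}\<close> by (auto simp: xln1p_def b_def)
  then show "t \<in> xln1p ` {0..}" by auto
qed (auto simp: xln1p_nonneg)

lemma xln1p_inv_nonneg: "0 \<le> t \<Longrightarrow> 0 \<le> xln1p_inv t"
  using the_inv_into_into[OF strict_mono_on_imp_inj_on[OF strict_mono_on_xln1p], of t "{0..}"]
  by (simp add: xln1p_inv_def xln1p_image)

lemma xln1p_xln1p_inv: "0 \<le> t \<Longrightarrow> xln1p (xln1p_inv t) = t"
  using f_the_inv_into_f[OF strict_mono_on_imp_inj_on[OF strict_mono_on_xln1p]]
  by (simp add: xln1p_inv_def xln1p_image)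

lemma xln1p_inv_xln1p: "0 \<le> v \<Longrightarrow> xln1p_inv (xln1p v) = v"
  using the_inv_into_f_f[OF strict_mono_on_imp_inj_on[OF strict_mono_on_xln1p]]
  by (simp add: xln1p_inv_def)

lemma xln1p_inv_less_iff: "0 \<le> t \<Longrightarrow> 0 \<le> v \<Longrightarrow> xln1p_inv t < v \<longleftrightarrow> t < xln1p v"
  using strict_mono_on_less[OF strict_mono_on_xln1p, of "xln1p_inv t" v]
  by (simp add: xln1p_inv_nonneg xln1p_xln1p_inv)

lemma concave_on_xln1p_inv: "concave_on {0..} xln1p_inv"
  unfolding xln1p_inv_def
  using convex_on_xln1p strict_mono_on_xln1p xln1p_image by (rule concave_on_the_inv_into) simp

lemma mono_on_xln1p_inv: "mono_on {0..} xln1p_inv"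
proof (rule mono_onI)
  fix s t :: real assume "s \<in> {0..}" "t \<in> {0..}" "s \<le> t"
  then show "xln1p_inv s \<le> xln1p_inv t"
    using xln1p_inv_less_iff[of t "xln1p_inv s"] by (simp add: xln1p_inv_nonneg xln1p_xln1p_inv)
qed

lemma filterlim_xln1p_inv_at_top: "filterlim xln1p_inv at_top at_top"
  by (rule filterlim_at_top_at_top[where Q = "\<lambda>t. 0 \<le> t" and P = "\<lambda>v. 0 \<le> v" and g = xln1p])
     (auto simp: xln1p_inv_xln1p xln1p_nonneg mono_onD[OF mono_on_xln1p_inv])

lemma xln1p_inv_pos: "0 < t \<Longrightarrow> 0 < xln1p_inv t"
  using xln1p_xln1p_inv[of t] xln1p_inv_nonneg[of t]
  by (cases "xln1p_inv t = 0") (auto simp: xln1p_def)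

lemma filterlim_xln1p_inv_at_right_0: "filterlim xln1p_inv (at_right 0) (at_right 0)"
proof (rule tendsto_imp_filterlim_at_right)
  show "(xln1p_inv \<longlongrightarrow> 0) (at_right 0)"
  proof (rule order_tendstoI)
    fix e :: real assume "e < 0"
    show "\<forall>\<^sub>F t in at_right 0. e < xln1p_inv t"
      using eventually_at_right_less
      by (rule eventually_mono) (use \<open>e < 0\<close> xln1p_inv_pos in force)
  next
    fix e :: real assume "0 < e"
    then have "0 < xln1p e" by (rule xln1p_pos)
    show "\<forall>\<^sub>F t in at_right 0. xln1p_inv t < e"
      using eventually_at_right_real[OF \<open>0 < xln1p e\<close>]
      by (rule eventually_mono) (use \<open>0 < e\<close> in \<open>simp add: xln1p_inv_less_iff\<close>)
  qed
  show "\<forall>\<^sub>F t in at_right 0. 0 < xln1p_inv t"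
    using eventually_at_right_less by (rule eventually_mono) (rule xln1p_inv_pos)
qed

lemma xln1p_inv_over_self: "0 < t \<Longrightarrow> xln1p_inv t / t = 1 / ln (1 + xln1p_inv t)"
  using xln1p_xln1p_inv[of t] xln1p_inv_pos[of t] by (auto simp: xln1p_def field_simps)

lemma snowflaking_xln1p_inv: "snowflaking xln1p_inv"
proof -
  have ratio: "\<forall>\<^sub>F t in F. xln1p_inv t / t = 1 / ln (1 + xln1p_inv t)"
    if "\<forall>\<^sub>F t in F. 0 < t" for F
    using that by (rule eventually_mono) (rule xln1p_inv_over_self)
  have "filterlim (\<lambda>v. 1 / ln (1 + v)) at_top (at_right (0::real))"
    by real_asymp
  then have S3: "filterlim (\<lambda>t. xln1p_inv t / t) at_top (at_right 0)"
    unfolding filterlim_cong[OF refl refl ratio[OF eventually_at_right_less]]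
    by (rule filterlim_compose[OF _ filterlim_xln1p_inv_at_right_0])
  have "((\<lambda>v. 1 / ln (1 + v)) \<longlongrightarrow> 0) (at_top :: real filter)"
    by real_asymp
  then have S4: "((\<lambda>t. xln1p_inv t / t) \<longlongrightarrow> 0) at_top"
    unfolding filterlim_cong[OF refl refl ratio[OF eventually_gt_at_top]]
    by (rule filterlim_compose[OF _ filterlim_xln1p_inv_at_top])
  have "xln1p_inv 0 = 0" using xln1p_inv_xln1p[of 0] by simp
  with S3 S4 show ?thesis
    unfolding snowflaking_def by (simp add: xln1p_inv_nonneg concave_on_xln1p_inv)
qed

text \<open>The difference of the two sides grows like (a + b - c) x ln x.\<close>

lemma eventually_xln1p_scaled_triangle:
  fixes a b c :: real
  assumes "0 < a" "0 < b" "0 < c" "c < a + b"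
  shows "\<forall>\<^sub>F x in at_top. xln1p (x * c) \<le> xln1p (x * a) + xln1p (x * b)"
proof -
  have "filterlim (\<lambda>x. xln1p (x * a) + xln1p (x * b) - xln1p (x * c)) at_top at_top"
    using assms unfolding xln1p_def by real_asymp
  then show ?thesis
    unfolding filterlim_at_top by (auto elim: allE[of _ 0] eventually_mono)
qed

lemma eventually_metric_on_scaled_dist:
  fixes p :: "'a \<Rightarrow> 'b::metric_space" and g :: "real \<Rightarrow> real"
  assumes "finite X" "inj_on p X"
    and strict: "\<And>i j k. \<lbrakk>i \<in> X; j \<in> X; k \<in> X; i \<noteq> j; j \<noteq> k; i \<noteq> k\<rbrakk> \<Longrightarrow>
      dist (p i) (p k) < dist (p i) (p j) + dist (p j) (p k)"
    and g0: "g 0 = 0" and g_pos: "\<And>v. 0 < v \<Longrightarrow> 0 < g v"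
    and g_triangle: "\<And>a b c. \<lbrakk>0 < a; 0 < b; 0 < c; c < a + b\<rbrakk> \<Longrightarrow>
      \<forall>\<^sub>F x in at_top. g (x * c) \<le> g (x * a) + g (x * b)"
  shows "\<forall>\<^sub>F l in at_top. metric_on X (\<lambda>i j. g (l * dist (p i) (p j)))"
proof -
  define T where "T = {(i, j, k) \<in> X \<times> X \<times> X. i \<noteq> j \<and> j \<noteq> k \<and> i \<noteq> k}"
  have dist_pos: "0 < dist (p i) (p j)" if "i \<in> X" "j \<in> X" "i \<noteq> j" for i j
    using that inj_onD[OF assms(2)] by fastforce
  have "finite T" unfolding T_def using assms(1) by (auto intro: finite_subset[of _ "X \<times> X \<times> X"])
  moreover have "\<forall>\<^sub>F l in at_top.
      g (l * dist (p i) (p k)) \<le> g (l * dist (p i) (p j)) + g (l * dist (p j) (p k))"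
    if "(i, j, k) \<in> T" for i j k
    using that by (auto simp: T_def intro!: g_triangle strict dist_pos)
  ultimately have "\<forall>\<^sub>F l in at_top. \<forall>(i, j, k) \<in> T.
      g (l * dist (p i) (p k)) \<le> g (l * dist (p i) (p j)) + g (l * dist (p j) (p k))"
    by (auto intro: eventually_ball_finite)
  then show ?thesis
    using eventually_gt_at_top[of 0]
  proof eventually_elim
    case (elim l)
    define d where "d i j = g (l * dist (p i) (p j))" for i j
    have d_nonneg: "0 \<le> d i j" for i j
      using g_pos[of "l * dist (p i) (p j)"] g0 \<open>0 < l\<close>
      by (cases "dist (p i) (p j) = 0") (auto simp: d_def)
    have d_eq_0: "d i j = 0 \<longleftrightarrow> i = j" if "i \<in> X" "j \<in> X" for i j
      using g_pos[of "l * dist (p i) (p j)"] g0 dist_pos[OF that] \<open>0 < l\<close>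
      by (cases "i = j") (auto simp: d_def)
    have d_triangle: "d i k \<le> d i j + d j k" if "i \<in> X" "j \<in> X" "k \<in> X" for i j k
    proof (cases "i = j \<or> j = k \<or> i = k")
      case True
      then show ?thesis using d_nonneg[of i j] d_nonneg[of j k] by (auto simp: d_def g0)
    next
      case False
      with that have "(i, j, k) \<in> T" by (simp add: T_def)
      with elim(1) show ?thesis unfolding d_def by fast
    qed
    have "metric_on X d"
      unfolding metric_on_def using d_nonneg d_eq_0 d_triangle by (simp add: d_def dist_commute)
    then show ?case by (simp add: d_def[abs_def])
  qed
qed

lemma det2_eq_0_if_norm_add_eq:
  fixes x y :: "real^2"
  assumes "norm (x + y) = norm x + norm y"
  shows "x$1 * y$2 = x$2 * y$1"
proof (cases "x = 0")
  case False
  have eq: "norm x *\<^sub>R y = norm y *\<^sub>R x" using assms by (simp add: norm_triangle_eq)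
  have parallel: "norm x * y$i = norm y * x$i" for i
    using arg_cong[OF eq, of "\<lambda>v. v$i"] by simp
  have "norm x * (x$1 * y$2 - x$2 * y$1) = x$1 * (norm x * y$2) - x$2 * (norm x * y$1)"
    by (simp add: algebra_simps)
  also have "\<dots> = x$1 * (norm y * x$2) - x$2 * (norm y * x$1)"
    by (simp only: parallel)
  also have "\<dots> = 0"
    by (simp add: algebra_simps)
  finally show ?thesis using False by simp
qed simp

definition parabola_point :: "nat \<Rightarrow> real^2" where
  "parabola_point i = vector [real i, (real i)^2]"

lemma inj_parabola_point: "inj parabola_point"
proof (rule injI)
  fix i j assume "parabola_point i = parabola_point j"
  then have "parabola_point i $ 1 = parabola_point j $ 1" by simp
  then show "i = j" by (simp add: parabola_point_def)
qed

lemma parabola_point_strict_triangle: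
  assumes "i \<noteq> j" "j \<noteq> k" "i \<noteq> k"
  shows "dist (parabola_point i) (parabola_point k)
    < dist (parabola_point i) (parabola_point j) + dist (parabola_point j) (parabola_point k)"
proof -
  define x where "x = parabola_point i - parabola_point j"
  define y where "y = parabola_point j - parabola_point k"
  have "x$1 * y$2 - x$2 * y$1 = (real i - real j) * (real j - real k) * (real k - real i)"
    unfolding x_def y_def parabola_point_def by (simp add: algebra_simps power2_eq_square)
  also have "\<dots> \<noteq> 0" using assms by simp
  finally have "norm (x + y) \<noteq> norm x + norm y"
    using det2_eq_0_if_norm_add_eq by force
  moreover have "x + y = parabola_point i - parabola_point k" unfolding x_def y_def by simp
  ultimately show ?thesis
    using norm_triangle_ineq[of x y] by (simp add: dist_norm x_def y_def)
qed

theorem mainTheorem10: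
  shows "\<exists>h. snowflaking h \<and>
           (\<forall>n::nat. \<exists>(X::nat set) (d::nat \<Rightarrow> nat \<Rightarrow> real) (f::nat \<Rightarrow> real^2).
              finite X \<and> card X = n \<and> metric_on X d \<and>
              (\<forall>x\<in>X. \<forall>y\<in>X. dist (f x) (f y) = h (d x y)))"
proof (intro exI[of _ xln1p_inv] conjI allI)
  fix n :: nat
  define d where "d l i j = xln1p (l * dist (parabola_point i) (parabola_point j))" for l i j
  have "\<forall>\<^sub>F l in at_top. metric_on {..<n} (d l)"
    unfolding d_def
  proof (rule eventually_metric_on_scaled_dist)
    show "inj_on parabola_point {..<n}"
      using inj_parabola_point by (rule inj_on_subset) simp
  qed (simp_all add: parabola_point_strict_triangle eventually_xln1p_scaled_triangle xln1p_pos)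
  then have "\<forall>\<^sub>F l in at_top. 0 < l \<and> metric_on {..<n} (d l)"
    by (intro eventually_conj eventually_gt_at_top)
  then obtain l where "0 < l" "metric_on {..<n} (d l)"
    using eventually_happens'[OF trivial_limit_at_top_linorder] by blast
  moreover have "dist (l *\<^sub>R parabola_point i) (l *\<^sub>R parabola_point j) = xln1p_inv (d l i j)" for i j
    using \<open>0 < l\<close> by (simp add: d_def xln1p_inv_xln1p dist_norm flip: scaleR_diff_right)
  ultimately show "\<exists>(X::nat set) d (f::nat \<Rightarrow> real^2). finite X \<and> card X = n \<and> metric_on X d \<and>
      (\<forall>x\<in>X. \<forall>y\<in>X. dist (f x) (f y) = xln1p_inv (d x y))"
    by (intro exI[of _ "{..<n}"] exI[of _ "d l"] exI[of _ "\<lambda>i. l *\<^sub>R parabola_point i"]) simp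
qed (rule snowflaking_xln1p_inv)

end
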